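(* For every $\delta>0$ and $n\in\mathbb{N}$ there exists $N\in\mathbb{N}$ such that the following holds. Let $I$, $J$, $K$ be sets each with at least $N$ elements, let $X$ be a finite set, and for all $i\in I$, $j\in J$, $k\in K$ let $X_{ijk}\subseteq X$ satisfy $|X_{ijk}|\ge\delta|X|$. Then there exist $x\in X$ and subsets $I'\subseteq I$, $J'\subseteq J$, $K'\subseteq K$, each with at least $n$ elements, such that $x\in X_{ijk}$ for all $i\in I'$, $j\in J'$, $k\in K'$. *)

theory Defs
  imports Complex_Main
begin

text \<open>A set has at least n elements (the set may be infinite).\<close>
definition at_least :: "nat \<Rightarrow> 'a set \<Rightarrow> bool" where
  "at_least n A \<longleftrightarrow> (\<exists>B\<subseteq>A. finite B \<and> card B \<ge> n)"

end

theory Submission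
  imports Defs
begin

(* Averaging over X yields a point x lying in S i j k for at least a \<delta>-fraction of all triples.
   Read these triples as a dense bipartite relation between pairs (i, j) and elements k. A
   Kovari-Sos-Turan argument (repeatedly pass to the neighbourhood of an element of above-average
   degree) gives n elements k adjacent to a c-fraction of the pairs, c = \<delta>/2 (\<delta>/4)^n.
   Those pairs form a relation of density c between I and J; the same argument once more gives
   n elements j and at least c/2 (c/4)^n |I| >= n elements i. *)

lemma exists_ge_average:
  fixes f :: "'a \<Rightarrow> real" and c :: real
  assumes "finite A" "A \<noteq> {}" "c * card A \<le> (\<Sum>a\<in>A. f a)"
  shows "\<exists>a\<in>A. c \<le> f a"
proof (rule ccontr)
  assume "\<not> ?thesis"
  then have "(\<Sum>a\<in>A. f a) < real (card A) * c"
    using assms by (intro sum_bounded_above_strict) (auto simp: card_gt_0_iff)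
  with assms(3) show False
    by (simp add: mult.commute)
qed

lemma card_pairs_eq_sum_card:
  assumes "finite A" "finite B"
  shows "card {(a, b) \<in> A \<times> B. R a b} = (\<Sum>a\<in>A. card {b\<in>B. R a b})"
proof -
  have "{(a, b) \<in> A \<times> B. R a b} = (SIGMA a:A. {b\<in>B. R a b})"
    by auto
  then show ?thesis
    using assms by simp
qed

lemma exists_point_in_many_sets:
  fixes S :: "'p \<Rightarrow> 'x set" and \<delta> :: real
  assumes "finite X" "X \<noteq> {}" "finite P"
    and "\<And>p. p \<in> P \<Longrightarrow> S p \<subseteq> X \<and> \<delta> * card X \<le> card (S p)"
  shows "\<exists>x\<in>X. \<delta> * card P \<le> card {p\<in>P. x \<in> S p}"
proof -
  have "(\<Sum>x\<in>X. card {p\<in>P. x \<in> S p}) = (\<Sum>p\<in>P. card {x\<in>X. x \<in> S p})"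
    using assms(1,3) by (rule sum_multicount_gen) simp
  also have "\<dots> = (\<Sum>p\<in>P. card (S p))"
  proof (rule sum.cong)
    fix p assume "p \<in> P"
    then have "{x\<in>X. x \<in> S p} = S p"
      using assms(4) by blast
    then show "card {x\<in>X. x \<in> S p} = card (S p)"
      by simp
  qed simp
  finally have "(\<Sum>x\<in>X. real (card {p\<in>P. x \<in> S p})) = (\<Sum>p\<in>P. real (card (S p)))"
    unfolding of_nat_sum[symmetric] by (rule arg_cong)
  moreover have "(\<Sum>p\<in>P. \<delta> * card X) \<le> (\<Sum>p\<in>P. real (card (S p)))"
    using assms(4) by (intro sum_mono) auto
  ultimately have "\<delta> * card P * card X \<le> (\<Sum>x\<in>X. real (card {p\<in>P. x \<in> S p}))"
    by (simp add: mult_ac)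
  then show ?thesis
    using exists_ge_average[OF assms(1,2)] by blast
qed

lemma exists_high_codegree:
  fixes R :: "'a \<Rightarrow> 'b \<Rightarrow> bool" and d N :: real
  assumes "finite A" "finite B" "B \<noteq> {}" "card B \<le> N" "0 \<le> d"
    and "\<And>a. a \<in> A \<Longrightarrow> d \<le> card {b\<in>B. R a b}"
  shows "\<exists>b\<in>B. card A * d / N \<le> card {a\<in>A. R a b}"
proof -
  have "(\<Sum>a\<in>A. card {b\<in>B. R a b}) = (\<Sum>b\<in>B. card {a\<in>A. R a b})"
    using assms(1,2) by (rule sum_multicount_gen) simp
  then have "(\<Sum>a\<in>A. real (card {b\<in>B. R a b})) = (\<Sum>b\<in>B. real (card {a\<in>A. R a b}))"
    unfolding of_nat_sum[symmetric] by (rule arg_cong)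
  moreover have "(\<Sum>a\<in>A. d) \<le> (\<Sum>a\<in>A. real (card {b\<in>B. R a b}))"
    using assms(6) by (intro sum_mono) auto
  ultimately have "card A * d / card B * card B \<le> (\<Sum>b\<in>B. real (card {a\<in>A. R a b}))"
    using assms(2,3) by simp
  then obtain b where "b \<in> B" "card A * d / card B \<le> card {a\<in>A. R a b}"
    using exists_ge_average[OF assms(2,3)] by blast
  moreover have "0 < card B"
    using assms(2,3) by (simp add: card_gt_0_iff)
  then have "card A * d / N \<le> card A * d / card B"
    using assms(4,5) by (intro divide_left_mono mult_pos_pos) auto
  ultimately show ?thesis
    by (meson order_trans)
qed

lemma card_Collect_Diff_singleton:
  assumes "finite B" "b \<in> B" "P b"
  shows "card {x\<in>B - {b}. P x} + 1 = card {x\<in>B. P x}"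
proof -
  have "card {x\<in>B. P x} = Suc (card ({x\<in>B. P x} - {b}))"
    using assms by (intro card.remove) auto
  moreover have "{x\<in>B. P x} - {b} = {x\<in>B - {b}. P x}"
    by auto
  ultimately show ?thesis
    by simp
qed

lemma common_neighbours_of_min_degree:
  fixes R :: "'a \<Rightarrow> 'b \<Rightarrow> bool" and d N :: real
  assumes "finite A" "A \<noteq> {}" "finite B" "card B \<le> N" "n \<le> d"
    and "\<And>a. a \<in> A \<Longrightarrow> d \<le> card {b\<in>B. R a b}"
  shows "\<exists>F\<subseteq>B. card F = n \<and>
           (\<exists>A'\<subseteq>A. card A * ((d - n) / N) ^ n \<le> card A' \<and> (\<forall>a\<in>A'. \<forall>b\<in>F. R a b))"
  using assms
proof (induction n arbitrary: A B d)
  \<comment> \<open>N only bounds card B from above, so that it survives passing from B to B - {b}.\<close>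
  case 0
  then show ?case
    by (intro exI[of _ "{}"] conjI exI[of _ A]) auto
next
  case (Suc n)
  note A = Suc.prems(1,2) and B = Suc.prems(3,4) and deg = Suc.prems(6)
  define q where "q = (d - Suc n) / N"
  obtain a0 where "a0 \<in> A"
    using A by blast
  then have "1 \<le> card {b\<in>B. R a0 b}"
    using Suc.prems(5) deg[of a0] by linarith
  then have "B \<noteq> {}" "0 < real (card B)"
    using B(1) by (auto simp: card_gt_0_iff)
  then have "0 < N"
    using B(2) by linarith
  obtain b where "b \<in> B" and A1_large: "card A * d / N \<le> card {a\<in>A. R a b}"
    using exists_high_codegree[OF A(1) B(1) \<open>B \<noteq> {}\<close> B(2), of d R] Suc.prems(5) deg by auto
  define A1 where "A1 = {a\<in>A. R a b}"
  have "0 < card A * d / N"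
    using A Suc.prems(5) \<open>0 < N\<close> by (simp add: card_gt_0_iff)
  with A1_large have "A1 \<noteq> {}"
    unfolding A1_def by (metis card.empty of_nat_0 linorder_not_le)
  have "d - 1 \<le> card {b'\<in>B - {b}. R a b'}" if "a \<in> A1" for a
    using deg[of a] that card_Collect_Diff_singleton[OF B(1) \<open>b \<in> B\<close>, of "R a"]
    unfolding A1_def by fastforce
  moreover have "card (B - {b}) \<le> N"
    using B \<open>b \<in> B\<close> by (simp add: card_Diff_singleton)
  ultimately obtain F A' where F: "F \<subseteq> B - {b}" "card F = n"
    and A': "A' \<subseteq> A1" "card A1 * q ^ n \<le> card A'" "\<forall>a\<in>A'. \<forall>b\<in>F. R a b"
    using Suc.IH[where A = A1 and B = "B - {b}" and d = "d - 1"] Suc.prems \<open>A1 \<noteq> {}\<close>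
    unfolding q_def A1_def by (auto simp: algebra_simps)
  have "0 \<le> q" "q \<le> d / N"
    using Suc.prems(5) \<open>0 < N\<close> unfolding q_def by (auto intro: divide_right_mono)
  then have "q * q ^ n \<le> d / N * q ^ n"
    by (intro mult_right_mono) auto
  then have "card A * q ^ Suc n \<le> card A * (d / N) * q ^ n"
    by (simp add: mult_left_mono mult.assoc del: times_divide_eq_right)
  also have "\<dots> \<le> card A1 * q ^ n"
    using A1_large \<open>0 \<le> q\<close> unfolding A1_def by (intro mult_right_mono) auto
  also have "\<dots> \<le> card A'"
    by (fact A'(2))
  finally have "card A * q ^ Suc n \<le> card A'" .
  moreover have "insert b F \<subseteq> B" "card (insert b F) = Suc n"
    using F \<open>b \<in> B\<close> finite_subset[OF F(1)] B(1) by (auto simp: card_insert_if)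
  moreover have "A' \<subseteq> A" "\<forall>a\<in>A'. \<forall>b'\<in>insert b F. R a b'"
    using A' unfolding A1_def by auto
  ultimately show ?case
    unfolding q_def by blast
qed

lemma many_vertices_of_high_degree:
  fixes R :: "'a \<Rightarrow> 'b \<Rightarrow> bool" and \<epsilon> :: real
  assumes "finite A" "finite B" "B \<noteq> {}" "0 \<le> \<epsilon>"
    and "\<epsilon> * card A * card B \<le> card {(a, b) \<in> A \<times> B. R a b}"
  shows "\<epsilon> / 2 * card A \<le> card {a\<in>A. \<epsilon> * card B / 2 \<le> card {b\<in>B. R a b}}"
proof -
  define G where "G = {a\<in>A. \<epsilon> * card B / 2 \<le> card {b\<in>B. R a b}}"
  define deg where "deg a = real (card {b\<in>B. R a b})" for a
  have "G \<subseteq> A"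
    unfolding G_def by auto
  have "\<epsilon> * card A * card B \<le> (\<Sum>a\<in>A. deg a)"
    using assms(5) unfolding deg_def card_pairs_eq_sum_card[OF assms(1,2)] by simp
  also have "\<dots> = (\<Sum>a\<in>A - G. deg a) + (\<Sum>a\<in>G. deg a)"
    by (rule sum.subset_diff[OF \<open>G \<subseteq> A\<close> assms(1)])
  also have "\<dots> \<le> (\<Sum>a\<in>A - G. \<epsilon> * card B / 2) + (\<Sum>a\<in>G. real (card B))"
    unfolding deg_def G_def using assms(2) by (intro add_mono sum_mono) (auto intro: card_mono)
  also have "\<dots> \<le> card A * (\<epsilon> * card B / 2) + card G * card B"
    using assms(1,4) \<open>G \<subseteq> A\<close> by (simp add: card_Diff_subset card_mono mult_right_mono)
  finally have "\<epsilon> / 2 * card A * card B \<le> card G * card B"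
    by (simp add: algebra_simps)
  then show ?thesis
    using assms(2,3) unfolding G_def by (simp add: card_gt_0_iff)
qed

lemma common_neighbours_of_density:
  fixes R :: "'a \<Rightarrow> 'b \<Rightarrow> bool" and \<epsilon> :: real
  assumes "finite A" "A \<noteq> {}" "finite B" "B \<noteq> {}" "0 < \<epsilon>" "4 * n \<le> \<epsilon> * card B"
    and "\<epsilon> * card A * card B \<le> card {(a, b) \<in> A \<times> B. R a b}"
  shows "\<exists>F\<subseteq>B. card F = n \<and>
           (\<exists>A'\<subseteq>A. \<epsilon> / 2 * (\<epsilon> / 4) ^ n * card A \<le> card A' \<and> (\<forall>a\<in>A'. \<forall>b\<in>F. R a b))"
proof -
  define d where "d = \<epsilon> * card B / 2"
  define G where "G = {a\<in>A. d \<le> card {b\<in>B. R a b}}"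
  have G_large: "\<epsilon> / 2 * card A \<le> card G"
    unfolding G_def d_def using assms by (intro many_vertices_of_high_degree) auto
  moreover have "0 < \<epsilon> / 2 * card A"
    using assms(1,2,5) by (simp add: card_gt_0_iff)
  ultimately have "G \<noteq> {}"
    by auto
  have "G \<subseteq> A" "finite G"
    unfolding G_def using assms(1) by auto
  have "n \<le> d"
    using assms(6) unfolding d_def by linarith
  moreover have "\<And>a. a \<in> G \<Longrightarrow> d \<le> card {b\<in>B. R a b}"
    unfolding G_def by auto
  ultimately have "\<exists>F\<subseteq>B. card F = n \<and>
      (\<exists>A'\<subseteq>G. card G * ((d - n) / card B) ^ n \<le> card A' \<and> (\<forall>a\<in>A'. \<forall>b\<in>F. R a b))"
    by (rule common_neighbours_of_min_degree[OF \<open>finite G\<close> \<open>G \<noteq> {}\<close> assms(3) order_refl])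
  then obtain F A' where F: "F \<subseteq> B" "card F = n"
    and A': "A' \<subseteq> G" "card G * ((d - n) / card B) ^ n \<le> card A'" "\<forall>a\<in>A'. \<forall>b\<in>F. R a b"
    by blast
  have "\<epsilon> / 4 \<le> (d - n) / card B"
    using assms(3,4,6) unfolding d_def by (simp add: field_simps card_gt_0_iff)
  then have "(\<epsilon> / 4) ^ n \<le> ((d - n) / card B) ^ n"
    using assms(5) by (intro power_mono) auto
  with G_large have "\<epsilon> / 2 * card A * (\<epsilon> / 4) ^ n \<le> card G * ((d - n) / card B) ^ n"
    using assms(5) by (intro mult_mono) auto
  then show ?thesis
    using F A' \<open>G \<subseteq> A\<close> by (intro exI[of _ F] conjI exI[of _ A']) (auto simp: mult_ac)
qed

lemma common_point_of_dense_triple_family: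
  fixes S :: "'i \<Rightarrow> 'j \<Rightarrow> 'k \<Rightarrow> 'x set" and \<delta> c :: real and n :: nat
  defines "c \<equiv> \<delta> / 2 * (\<delta> / 4) ^ n"
  assumes "finite I" "I \<noteq> {}" "finite J" "J \<noteq> {}" "finite K" "K \<noteq> {}"
    and "finite X" "X \<noteq> {}" "0 < \<delta>"
    and large: "4 * n \<le> \<delta> * card K" "4 * n \<le> c * card J" "n \<le> c / 2 * (c / 4) ^ n * card I"
    and dense: "\<And>i j k. i \<in> I \<Longrightarrow> j \<in> J \<Longrightarrow> k \<in> K \<Longrightarrow> S i j k \<subseteq> X \<and> \<delta> * card X \<le> card (S i j k)"
  shows "\<exists>x\<in>X. \<exists>I'\<subseteq>I. \<exists>J'\<subseteq>J. \<exists>K'\<subseteq>K. n \<le> card I' \<and> card J' = n \<and> card K' = n \<and>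
           (\<forall>i\<in>I'. \<forall>j\<in>J'. \<forall>k\<in>K'. x \<in> S i j k)"
proof -
  let ?P = "(I \<times> J) \<times> K"
  obtain x where "x \<in> X"
    and x: "\<delta> * card ?P \<le> card {p\<in>?P. x \<in> S (fst (fst p)) (snd (fst p)) (snd p)}"
    using exists_point_in_many_sets[of X ?P "\<lambda>p. S (fst (fst p)) (snd (fst p)) (snd p)" \<delta>] assms
    by auto
  have "{p\<in>?P. x \<in> S (fst (fst p)) (snd (fst p)) (snd p)} =
      {(ij, k) \<in> (I \<times> J) \<times> K. x \<in> S (fst ij) (snd ij) k}"
    by auto
  with x have "\<delta> * card (I \<times> J) * card K \<le> card {(ij, k) \<in> (I \<times> J) \<times> K. x \<in> S (fst ij) (snd ij) k}"
    by (simp add: card_cartesian_product)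
  then obtain K' G where K': "K' \<subseteq> K" "card K' = n"
    and G: "G \<subseteq> I \<times> J" "c * card (I \<times> J) \<le> card G" "\<forall>ij\<in>G. \<forall>k\<in>K'. x \<in> S (fst ij) (snd ij) k"
    using common_neighbours_of_density[of "I \<times> J" K \<delta> n "\<lambda>ij k. x \<in> S (fst ij) (snd ij) k"] assms
    unfolding c_def by auto
  have "{(i, j) \<in> I \<times> J. (i, j) \<in> G} = G"
    using G(1) by auto
  with G(2) have "c * card I * card J \<le> card {(i, j) \<in> I \<times> J. (i, j) \<in> G}"
    by (simp add: card_cartesian_product mult.assoc)
  moreover have "0 < c"
    using \<open>0 < \<delta>\<close> unfolding c_def by simp
  ultimately obtain J' I' where J': "J' \<subseteq> J" "card J' = n"
    and I': "I' \<subseteq> I" "c / 2 * (c / 4) ^ n * card I \<le> card I'" "\<forall>i\<in>I'. \<forall>j\<in>J'. (i, j) \<in> G"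
    using common_neighbours_of_density[of I J c n "\<lambda>i j. (i, j) \<in> G"] assms
    by auto
  have "n \<le> card I'"
    using I'(2) large(3) by linarith
  moreover have "\<forall>i\<in>I'. \<forall>j\<in>J'. \<forall>k\<in>K'. x \<in> S i j k"
    using I'(3) G(3) by fastforce
  ultimately show ?thesis
    using \<open>x \<in> X\<close> I'(1) J' K' by blast
qed

lemma eventually_le_mult_real_sequentially:
  fixes a b :: real
  assumes "0 < a"
  shows "\<forall>\<^sub>F N in sequentially. b \<le> a * real N"
proof -
  obtain N0 :: nat where "b / a \<le> N0"
    using real_arch_simple by blast
  then show ?thesis
    using assms by (intro eventually_sequentiallyI[of N0]) (simp add: field_simps order_trans)
qed

lemma at_least_obtain_finite_subset:
  assumes "at_least n A"
  obtains B where "B \<subseteq> A" "finite B" "card B = n"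
proof -
  obtain C where "C \<subseteq> A" "finite C" "n \<le> card C"
    using assms unfolding at_least_def by blast
  then show ?thesis
    by (metis obtain_subset_with_card_n finite_subset order_trans that)
qed

lemma at_least_card: "finite A \<Longrightarrow> n \<le> card A \<Longrightarrow> at_least n A"
  unfolding at_least_def by blast

lemma common_point_of_dense_triple_family_at_least:
  fixes S :: "'i \<Rightarrow> 'j \<Rightarrow> 'k \<Rightarrow> 'x set" and \<delta> c :: real and n N :: nat
  defines "c \<equiv> \<delta> / 2 * (\<delta> / 4) ^ n"
  assumes "at_least N I" "at_least N J" "at_least N K" "finite X" "X \<noteq> {}" "0 < \<delta>"
    and large: "1 \<le> N" "4 * n \<le> \<delta> * N" "4 * n \<le> c * N" "n \<le> c / 2 * (c / 4) ^ n * N"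
    and dense: "\<forall>i\<in>I. \<forall>j\<in>J. \<forall>k\<in>K. S i j k \<subseteq> X \<and> \<delta> * card X \<le> card (S i j k)"
  shows "\<exists>x\<in>X. \<exists>I'\<subseteq>I. \<exists>J'\<subseteq>J. \<exists>K'\<subseteq>K. at_least n I' \<and> at_least n J' \<and> at_least n K' \<and>
           (\<forall>i\<in>I'. \<forall>j\<in>J'. \<forall>k\<in>K'. x \<in> S i j k)"
proof -
  obtain I0 where "I0 \<subseteq> I" "finite I0" "card I0 = N"
    using \<open>at_least N I\<close> by (rule at_least_obtain_finite_subset)
  obtain J0 where "J0 \<subseteq> J" "finite J0" "card J0 = N"
    using \<open>at_least N J\<close> by (rule at_least_obtain_finite_subset)
  obtain K0 where "K0 \<subseteq> K" "finite K0" "card K0 = N"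
    using \<open>at_least N K\<close> by (rule at_least_obtain_finite_subset)
  note sub = \<open>I0 \<subseteq> I\<close> \<open>J0 \<subseteq> J\<close> \<open>K0 \<subseteq> K\<close>
    and fin = \<open>finite I0\<close> \<open>finite J0\<close> \<open>finite K0\<close>
    and card = \<open>card I0 = N\<close> \<open>card J0 = N\<close> \<open>card K0 = N\<close>
  have "I0 \<noteq> {}" "J0 \<noteq> {}" "K0 \<noteq> {}"
    using card large(1) by auto
  moreover have "4 * n \<le> \<delta> * card K0" "4 * n \<le> c * card J0" "n \<le> c / 2 * (c / 4) ^ n * card I0"
    using large(2-4) unfolding card by simp_all
  moreover have "\<And>i j k. i \<in> I0 \<Longrightarrow> j \<in> J0 \<Longrightarrow> k \<in> K0 \<Longrightarrow> S i j k \<subseteq> X \<and> \<delta> * card X \<le> card (S i j k)"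
    using dense sub by blast
  ultimately obtain x I' J' K' where x: "x \<in> X" "\<forall>i\<in>I'. \<forall>j\<in>J'. \<forall>k\<in>K'. x \<in> S i j k"
    and sub': "I' \<subseteq> I0" "J' \<subseteq> J0" "K' \<subseteq> K0"
    and card': "n \<le> card I'" "card J' = n" "card K' = n"
    using common_point_of_dense_triple_family[of I0 J0 K0 X \<delta> n S] fin \<open>finite X\<close> \<open>X \<noteq> {}\<close> \<open>0 < \<delta>\<close>
    unfolding c_def by blast
  have "at_least n I'" "at_least n J'" "at_least n K'"
    using card' finite_subset[OF sub'(1) fin(1)] finite_subset[OF sub'(2) fin(2)]
      finite_subset[OF sub'(3) fin(3)] by (auto intro: at_least_card)
  moreover have "I' \<subseteq> I" "J' \<subseteq> J" "K' \<subseteq> K"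
    using sub sub' by auto
  ultimately show ?thesis
    using x by blast
qed

theorem lemma4p1:
  fixes \<delta> :: real and n :: nat
  assumes "\<delta> > 0"
  shows "\<exists>N::nat. \<forall>(I::'i set) (J::'j set) (K::'k set) (X::'x set)
            (S::'i \<Rightarrow> 'j \<Rightarrow> 'k \<Rightarrow> 'x set).
     at_least N I \<and> at_least N J \<and> at_least N K \<and> finite X \<and> X \<noteq> {} \<and>
     (\<forall>i\<in>I. \<forall>j\<in>J. \<forall>k\<in>K. S i j k \<subseteq> X \<and> real (card (S i j k)) \<ge> \<delta> * real (card X))
     \<longrightarrow> (\<exists>x\<in>X. \<exists>I'\<subseteq>I. \<exists>J'\<subseteq>J. \<exists>K'\<subseteq>K.
            at_least n I' \<and> at_least n J' \<and> at_least n K' \<and>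
            (\<forall>i\<in>I'. \<forall>j\<in>J'. \<forall>k\<in>K'. x \<in> S i j k))"
proof -
  define c where "c = \<delta> / 2 * (\<delta> / 4) ^ n"
  have "0 < c"
    using assms unfolding c_def by simp
  then have "\<forall>\<^sub>F N in sequentially.
      1 \<le> N \<and> 4 * n \<le> \<delta> * N \<and> 4 * n \<le> c * N \<and> n \<le> c / 2 * (c / 4) ^ n * N"
    using assms by (intro eventually_conj eventually_ge_at_top eventually_le_mult_real_sequentially) auto
  then obtain N :: nat where "1 \<le> N" "4 * n \<le> \<delta> * N" "4 * n \<le> c * N" "n \<le> c / 2 * (c / 4) ^ n * N"
    unfolding eventually_sequentially by auto
  then show ?thesis
    using common_point_of_dense_triple_family_at_least[where \<delta> = \<delta> and n = n and N = N, folded c_def] assms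
    by (intro exI[of _ N] allI impI) (elim conjE, assumption+)
qed

end
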